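(* There exists a beyond quantum state $W \in \mathcal{W}(\mathbb{C}^2\otimes\mathbb{C}^2)$ whose classical-input classical-output correlations are classically simulable; that is, there exist a probability space $(\Lambda,\omega)$ and, for every finite-outcome POVM $A=\{A_i\}_i$ on $\mathbb{C}^2$ and every finite-outcome POVM $B=\{B_j\}_j$ on $\mathbb{C}^2$, measurable response functions $\lambda\mapsto P(A_i|A,\lambda)\in[0,1]$ and $\lambda\mapsto P(B_j|B,\lambda)\in[0,1]$ with $\sum_i P(A_i|A,\lambda)=1=\sum_j P(B_j|B,\lambda)$ for all $\lambda$, such that for all such POVMs $A,B$ and all outcomes $i,j$, $$\operatorname{Tr}\big[W(A_i\otimes B_j)\big]=\int_\Lambda P(A_i|A,\lambda)\,P(B_j|B,\lambda)\,d\omega(\lambda).$$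
   Context: For finite-dimensional Hilbert spaces $\mathcal{H}_{A_1},\dots,\mathcal{H}_{A_n}$, a POPT (positive over all pure tensors) state is a Hermitian operator $W$ on $\bigotimes_i\mathcal{H}_{A_i}$ with $\operatorname{Tr}W=1$ and $\operatorname{Tr}[W(P_1\otimes\cdots\otimes P_n)]\ge 0$ for all positive semidefinite operators $P_i$ on $\mathcal{H}_{A_i}$; the set of POPT states is denoted $\mathcal{W}(\bigotimes_i\mathcal{H}_{A_i})$. A beyond quantum state (BQS) is a POPT state that is not positive semidefinite, i.e. an element of $\mathcal{W}(\bigotimes_i\mathcal{H}_{A_i})\setminus\mathcal{D}(\bigotimes_i\mathcal{H}_{A_i})$, where $\mathcal{D}$ denotes the set of density operators (positive semidefinite, unit trace). A POVM on $\mathcal{H}$ is a finite family of positive semidefinite operators summing to the identity. *)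

theory Defs
  imports "HOL-Analysis.Analysis" "HOL-Probability.Probability" "HOL-Library.Complex_Order"
begin

text \<open>Operators on a finite-dimensional Hilbert space with orthonormal basis indexed by
  the finite type 'n are matrices of type complex^'n^'n.  The space C^2 uses index type 2,
  and C^2 tensor C^2 uses the index type 2 \<times> 2.  The order on complex numbers is the one of
  HOL-Library.Complex_Order: z \<ge> 0 iff z is real and nonnegative.\<close>

definition hermitian :: "complex^'n^'n \<Rightarrow> bool" where
  "hermitian M \<longleftrightarrow> (\<forall>i j. M $ i $ j = cnj (M $ j $ i))"

definition psd :: "complex^'n^'n \<Rightarrow> bool" where
  "psd M \<longleftrightarrow> (\<forall>v :: complex^'n. 0 \<le> (\<Sum>i\<in>UNIV. \<Sum>j\<in>UNIV. cnj (v $ i) * M $ i $ j * v $ j))"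

definition tensor :: "complex^'n^'n \<Rightarrow> complex^'m^'m \<Rightarrow> complex^('n \<times> 'm)^('n \<times> 'm)" where
  "tensor A B = (\<chi> r. \<chi> c. A $ fst r $ fst c * B $ snd r $ snd c)"

definition popt :: "complex^(2 \<times> 2)^(2 \<times> 2) \<Rightarrow> bool" where
  "popt W \<longleftrightarrow> hermitian W \<and> trace W = 1 \<and>
     (\<forall>P Q :: complex^2^2. psd P \<and> psd Q \<longrightarrow> 0 \<le> trace (W ** tensor P Q))"

definition density :: "complex^'n^'n \<Rightarrow> bool" where
  "density M \<longleftrightarrow> psd M \<and> trace M = 1"

definition beyond_quantum :: "complex^(2 \<times> 2)^(2 \<times> 2) \<Rightarrow> bool" where
  "beyond_quantum W \<longleftrightarrow> popt W \<and> \<not> density W"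

text \<open>A finite-outcome POVM on C^2: a finite list of PSD operators summing to the identity;
  outcome i is the i-th list entry.\<close>
definition povm :: "(complex^2^2) list \<Rightarrow> bool" where
  "povm A \<longleftrightarrow> (\<forall>a \<in> set A. psd a) \<and> sum_list A = mat 1"

text \<open>It is without loss of generality:
  any model on an arbitrary probability space can be pushed forward along the measurable map
  sending a hidden variable to the table of all response probabilities
  (party flag, POVM, outcome) \<mapsto> probability, with the product sigma-algebra.\<close>
type_synonym hidden = "bool \<times> (complex^2^2) list \<times> nat \<Rightarrow> real"

end

theory Submission
  imports Defs
begin

(* Take W = (1 - t)/4 I + t/2 SWAP with t = 11/30.  Writing qubit operators as M = a I + b.sigma,
   Tr[W (M (x) N)] = a_M a_N + t b_M.b_N; since |b| <= a for positive M, W is POPT for |t| <= 1,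
   while on the singlet W has the eigenvalue (1 - 3t)/4 < 0.
   The hidden variable is a unit vector m.  Alice answers a_i + b_i.m.  Bob answers with a cubic
   in b_j.m that is nonnegative, bounded by a_j + b_j.m, and whose correlation with every affine
   function of m is 11/30 of the linear one; the missing weight is handed out in proportion to
   a_j.  Only moments of m up to order four enter, so the uniform distribution on the sphere can
   be replaced by a finite cubature rule, which makes the hidden-variable space finite. *)

section \<open>Qubit operators in Bloch coordinates\<close>

lemma one_neq_two_2 [simp]: "(1::2) \<noteq> 2" "(2::2) \<noteq> 1"
  by (simp_all add: exhaust_2)

lemma UNIV_2x2: "(UNIV :: (2 \<times> 2) set) = {(1,1), (1,2), (2,1), (2,2)}"
  using exhaust_2 by auto

lemma sum_UNIV_2x2: "sum f (UNIV :: (2 \<times> 2) set) = f (1,1) + f (1,2) + f (2,1) + f (2,2)"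
  unfolding UNIV_2x2 by (simp add: add.assoc)

lemma psd2_quadratic_form_nonneg:
  assumes "psd (M :: complex^2^2)"
  shows "0 \<le> cnj x * M$1$1 * x + cnj x * M$1$2 * y + cnj y * M$2$1 * x + cnj y * M$2$2 * y"
  using assms unfolding psd_def
  by (erule_tac x = "vector [x, y]" in allE) (simp add: sum_2 vector_2 add.assoc)

lemma psd2_imp_hermitian:
  assumes "psd (M :: complex^2^2)"
  shows "hermitian M"
proof -
  note form = psd2_quadratic_form_nonneg[OF assms]
  have "Im (M$1$1) = 0" "Im (M$2$2) = 0" "Im (M$1$2 + M$2$1) = 0" "Re (M$1$2) = Re (M$2$1)"
    using form[of 1 0] form[of 0 1] form[of 1 1] form[of 1 \<i>]
    by (auto simp: less_eq_complex_def)
  then have "M$1$1 = cnj (M$1$1)" "M$2$2 = cnj (M$2$2)" "M$1$2 = cnj (M$2$1)" "M$2$1 = cnj (M$1$2)"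
    by (auto simp: complex_eq_iff)
  then have "M$i$j = cnj (M$j$i)" for i j
    using exhaust_2[of i] exhaust_2[of j] by (elim disjE) simp_all
  then show ?thesis
    unfolding hermitian_def by blast
qed

text \<open>A hermitian M equals \<open>a I + b\<^sub>1 \<sigma>\<^sub>x + b\<^sub>2 \<sigma>\<^sub>y + b\<^sub>3 \<sigma>\<^sub>z\<close>
  with \<open>a = bloch_scalar M\<close> and \<open>b = bloch_vector M\<close>.\<close>

definition bloch_scalar :: "complex^2^2 \<Rightarrow> real" where
  "bloch_scalar M = Re (M$1$1 + M$2$2) / 2"

definition bloch_vector :: "complex^2^2 \<Rightarrow> real^3" where
  "bloch_vector M = vector [Re (M$1$2), - Im (M$1$2), Re (M$1$1 - M$2$2) / 2]"

lemma hermitian_bloch_entries: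
  assumes "hermitian M"
  defines "a \<equiv> bloch_scalar M" and "b \<equiv> bloch_vector M"
  shows "M$1$1 = complex_of_real (a + b$3)" "M$2$2 = complex_of_real (a - b$3)"
    "M$1$2 = Complex (b$1) (- b$2)" "M$2$1 = Complex (b$1) (b$2)"
proof -
  have "M$1$1 = cnj (M$1$1)" "M$2$2 = cnj (M$2$2)" "M$2$1 = cnj (M$1$2)"
    using assms(1) unfolding hermitian_def by blast+
  then show "M$1$1 = complex_of_real (a + b$3)" "M$2$2 = complex_of_real (a - b$3)"
    "M$1$2 = Complex (b$1) (- b$2)" "M$2$1 = Complex (b$1) (b$2)"
    by (simp_all add: a_def b_def bloch_scalar_def bloch_vector_def complex_eq_iff field_simps)
qed

lemma bloch_scalar_sum: "bloch_scalar (sum f S) = (\<Sum>i\<in>S. bloch_scalar (f i))"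
  by (simp add: bloch_scalar_def Re_sum sum.distrib sum_divide_distrib[symmetric])

lemma bloch_vector_sum: "bloch_vector (sum f S) = (\<Sum>i\<in>S. bloch_vector (f i))"
  by (simp add: bloch_vector_def vec_eq_iff forall_3 vector_3 sum_component Re_sum Im_sum
      sum_negf sum_subtractf sum_divide_distrib[symmetric])

lemma inner_vector_3: "inner b (vector [x, y, z] :: real^3) = b$1 * x + b$2 * y + b$3 * z"
  by (simp add: inner_vec_def sum_3 vector_3)

lemma norm_vector_3: "norm (vector [x, y, z] :: real^3) = sqrt (x^2 + y^2 + z^2)"
  by (simp add: norm_eq_sqrt_inner inner_vector_3 power2_eq_square)

lemma unit_vector_3_components:
  assumes "norm (m :: real^3) = 1"
  shows "(m$1)^2 + (m$2)^2 + (m$3)^2 = 1"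
  using assms by (simp add: norm_eq_sqrt_inner inner_vec_def sum_3 power2_eq_square)

lemma psd_imp_bloch_affine_nonneg:
  assumes "psd M" and "norm m = 1"
  shows "0 \<le> bloch_scalar M + inner (bloch_vector M) m"
proof -
  define a b where "a = bloch_scalar M" and "b = bloch_vector M"
  define x y z where "x = m$1" and "y = m$2" and "z = m$3"
  have unit: "x^2 + y^2 + z^2 = 1"
    using unit_vector_3_components[OF assms(2)] by (simp add: x_def y_def z_def)
  have inner_bm: "inner b m = b$1 * x + b$2 * y + b$3 * z"
    by (simp add: inner_vec_def sum_3 x_def y_def z_def)
  note entries = hermitian_bloch_entries[OF psd2_imp_hermitian[OF assms(1)], folded a_def b_def]
  note form = psd2_quadratic_form_nonneg[OF assms(1)]
  show ?thesis
  proof (cases "z = -1")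
    case True
    then have "x = 0" "y = 0" using unit by (simp_all add: sum_power2_eq_zero_iff)
    with True show ?thesis
      using form[of 0 1] by (simp add: entries inner_bm less_eq_complex_def flip: a_def b_def)
  next
    case False
    have "z^2 \<le> 1" using unit zero_le_power2[of x] zero_le_power2[of y] by linarith
    then have "-1 \<le> z" by (simp add: abs_square_le_1)
    with False have pos: "0 < 1 + z" by simp
    \<comment> \<open>the quadratic form at \<open>(1 + z, x + i y)\<close> is \<open>2 (1 + z) (a + b\<bullet>m)\<close> on the unit sphere\<close>
    have "0 \<le> Re (cnj (1+z) * M$1$1 * (1+z) + cnj (1+z) * M$1$2 * Complex x y
        + cnj (Complex x y) * M$2$1 * (1+z) + cnj (Complex x y) * M$2$2 * Complex x y)"
      using form[of "of_real (1+z)" "Complex x y"] by (simp add: less_eq_complex_def)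
    also have "\<dots> = (1+z)^2 * (a + b$3) + 2 * (1+z) * (b$1 * x + b$2 * y) + (x^2 + y^2) * (a - b$3)"
      by (simp add: entries algebra_simps power2_eq_square)
    also have "\<dots> = 2 * (1+z) * (a + inner b m)"
    proof -
      have "x^2 + y^2 = 1 - z^2" using unit by simp
      then show ?thesis by (simp only:) (simp add: inner_bm algebra_simps power2_eq_square)
    qed
    finally show ?thesis using pos by (simp add: zero_le_mult_iff a_def b_def)
  qed
qed

lemma psd_imp_norm_bloch_vector_le:
  assumes "psd M"
  shows "norm (bloch_vector M) \<le> bloch_scalar M"
proof -
  define b where "b = bloch_vector M"
  define m :: "real^3" where "m = (if b = 0 then axis 1 1 else - sgn b)"
  have "norm m = 1" by (simp add: m_def norm_sgn)
  moreover have "inner b m = - norm b"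
    by (simp add: m_def sgn_div_norm inner_commute power2_norm_eq_inner[symmetric] power2_eq_square)
  ultimately show ?thesis
    using psd_imp_bloch_affine_nonneg[OF assms] by (fastforce simp: b_def)
qed

lemma psd_imp_bloch_scalar_nonneg: "psd M \<Longrightarrow> 0 \<le> bloch_scalar M"
  using psd_imp_norm_bloch_vector_le norm_ge_zero order_trans by blast

lemma povm_nth_psd: "povm A \<Longrightarrow> i < length A \<Longrightarrow> psd (A ! i)"
  by (simp add: povm_def)

lemma povm_sum_nth: "povm A \<Longrightarrow> (\<Sum>i<length A. A ! i) = mat 1"
  by (simp add: povm_def sum_list_sum_nth atLeast0LessThan)

lemma povm_sum_bloch_scalar:
  assumes "povm A"
  shows "(\<Sum>i<length A. bloch_scalar (A ! i)) = 1"
proof -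
  have "(\<Sum>i<length A. bloch_scalar (A ! i)) = bloch_scalar (\<Sum>i<length A. A ! i)"
    by (rule bloch_scalar_sum[symmetric])
  then show ?thesis
    by (simp add: povm_sum_nth[OF assms] bloch_scalar_def mat_def)
qed

lemma povm_sum_bloch_vector:
  assumes "povm A"
  shows "(\<Sum>i<length A. bloch_vector (A ! i)) = 0"
proof -
  have "(\<Sum>i<length A. bloch_vector (A ! i)) = bloch_vector (\<Sum>i<length A. A ! i)"
    by (rule bloch_vector_sum[symmetric])
  then show ?thesis
    by (simp add: povm_sum_nth[OF assms] bloch_vector_def mat_def vec_eq_iff forall_3 vector_3)
qed

section \<open>A Werner-type POPT state\<close>

text \<open>\<open>werner t = (1 - t)/4 \<cdot> I + t/2 \<cdot> SWAP\<close>.\<close>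

definition werner :: "real \<Rightarrow> complex^(2 \<times> 2)^(2 \<times> 2)" where
  "werner t = (\<chi> r c. of_real ((1 - t) / 4) * (if r = c then 1 else 0)
      + of_real (t / 2) * (if fst r = snd c \<and> snd r = fst c then 1 else 0))"

lemma hermitian_werner: "hermitian (werner t)"
  unfolding hermitian_def
proof (intro allI)
  fix r c :: "2 \<times> 2"
  have "(r = c) = (c = r)" "(fst r = snd c \<and> snd r = fst c) = (fst c = snd r \<and> snd c = fst r)"
    by auto
  then show "werner t $ r $ c = cnj (werner t $ c $ r)"
    unfolding werner_def vec_lambda_beta by simp
qed

lemma trace_werner: "trace (werner t) = 1"
  by (simp add: trace_def werner_def sum_UNIV_2x2 field_simps)

lemma trace_werner_tensor:
  assumes "hermitian M" and "hermitian N"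
  shows "trace (werner t ** tensor M N) =
    of_real (bloch_scalar M * bloch_scalar N + t * inner (bloch_vector M) (bloch_vector N))"
proof -
  have werner_coefficients: "(1 - t) / 4 * (2 * a) * (2 * b) + t / 2 * (2 * (a * b + c)) = a * b + t * c"
    for a b c :: real
    by (simp add: field_simps)
  have "trace (werner t ** tensor M N) = of_real ((1 - t) / 4) * ((M$1$1 + M$2$2) * (N$1$1 + N$2$2))
      + of_real (t / 2) * (M$1$1 * N$1$1 + M$2$1 * N$1$2 + M$1$2 * N$2$1 + M$2$2 * N$2$2)"
    by (simp add: trace_def matrix_matrix_mult_def tensor_def werner_def sum_UNIV_2x2 algebra_simps)
  also have "\<dots> = of_real ((1 - t) / 4 * (2 * bloch_scalar M) * (2 * bloch_scalar N)
      + t / 2 * (2 * (bloch_scalar M * bloch_scalar N + inner (bloch_vector M) (bloch_vector N))))"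
    by (simp add: hermitian_bloch_entries[OF assms(1)] hermitian_bloch_entries[OF assms(2)]
        inner_vec_def sum_3 complex_eq_iff)
      (simp add: field_simps)
  also have "\<dots> = of_real (bloch_scalar M * bloch_scalar N + t * inner (bloch_vector M) (bloch_vector N))"
    by (simp only: werner_coefficients)
  finally show ?thesis .
qed

lemma popt_werner:
  assumes "\<bar>t\<bar> \<le> 1"
  shows "popt (werner t)"
  unfolding popt_def
proof (intro conjI hermitian_werner trace_werner allI impI)
  fix P Q :: "complex^2^2"
  assume "psd P \<and> psd Q"
  then have P: "psd P" and Q: "psd Q" by auto
  have "\<bar>t * inner (bloch_vector P) (bloch_vector Q)\<bar> \<le> norm (bloch_vector P) * norm (bloch_vector Q)"
    using assms unfolding abs_mult
    by (meson Cauchy_Schwarz_ineq2 abs_ge_zero mult_left_le_one_le order_trans)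
  also have "\<dots> \<le> bloch_scalar P * bloch_scalar Q"
    by (rule mult_mono[OF psd_imp_norm_bloch_vector_le[OF P] psd_imp_norm_bloch_vector_le[OF Q]
          psd_imp_bloch_scalar_nonneg[OF P] norm_ge_zero])
  finally have "0 \<le> bloch_scalar P * bloch_scalar Q + t * inner (bloch_vector P) (bloch_vector Q)"
    by (simp add: abs_le_iff)
  then show "0 \<le> trace (werner t ** tensor P Q)"
    by (simp add: trace_werner_tensor[OF psd2_imp_hermitian[OF P] psd2_imp_hermitian[OF Q]]
        less_eq_complex_def)
qed

lemma not_psd_werner:
  assumes "1/3 < t"
  shows "\<not> psd (werner t)"
proof
  \<comment> \<open>the singlet direction, on which SWAP acts as \<open>-1\<close>\<close>
  define v :: "complex^(2 \<times> 2)" where "v = (\<chi> r. if r = (1,2) then 1 else if r = (2,1) then -1 else 0)"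
  assume "psd (werner t)"
  then have "0 \<le> (\<Sum>i\<in>UNIV. \<Sum>j\<in>UNIV. cnj (v $ i) * werner t $ i $ j * v $ j)"
    unfolding psd_def by blast
  also have "\<dots> = werner t $ (1,2) $ (1,2) - werner t $ (1,2) $ (2,1)
      - werner t $ (2,1) $ (1,2) + werner t $ (2,1) $ (2,1)"
    by (simp add: v_def sum_UNIV_2x2)
  also have "\<dots> = of_real ((1 - 3 * t) / 2)"
    by (simp add: werner_def) (simp add: field_simps)
  finally show False
    using assms by (simp add: less_eq_complex_def)
qed

section \<open>A cubature rule on the unit sphere\<close>

lemma integral_pmf_of_list:
  assumes "pmf_of_list_wf xs"
  shows "(\<integral>x. f x \<partial>measure_pmf (pmf_of_list xs)) = (\<Sum>(x, w)\<leftarrow>xs. w * f x)"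
proof -
  define S where "S = set (map fst xs)"
  have "(\<integral>x. f x \<partial>measure_pmf (pmf_of_list xs)) = (\<Sum>a\<in>S. f a * pmf (pmf_of_list xs) a)"
    using set_pmf_of_list[OF assms] by (intro integral_measure_pmf_real) (auto simp: S_def)
  also have "\<dots> = (\<Sum>a\<in>S. \<Sum>(x, w)\<leftarrow>xs. if x = a then f x * w else 0)"
    by (simp add: pmf_pmf_of_list[OF assms] sum_list_map_filter' sum_list_const_mult[symmetric]
        case_prod_unfold if_distrib cong: if_cong)
  also have "\<dots> = (\<Sum>(x, w)\<leftarrow>xs. \<Sum>a\<in>S. if x = a then f x * w else 0)"
    by (induction xs) (simp_all add: sum.distrib case_prod_unfold)
  also have "\<dots> = (\<Sum>(x, w)\<leftarrow>xs. w * f x)"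
  proof (rule arg_cong[where f = sum_list], rule map_cong[OF refl])
    fix z assume "z \<in> set xs"
    then have "fst z \<in> S" by (simp add: S_def)
    then show "(case z of (x, w) \<Rightarrow> \<Sum>a\<in>S. if x = a then f x * w else 0)
        = (case z of (x, w) \<Rightarrow> w * f x)"
      by (cases z) (simp add: S_def mult.commute)
  qed
  finally show ?thesis .
qed

text \<open>The six vertices of the octahedron (weight 13/240 each) together with the 24 points
  \<open>(\<plusminus>2, \<plusminus>2, \<plusminus>1)/3\<close> and their permutations (weight 9/320 each)
  form a cubature rule that integrates every polynomial of degree at most 5 on the sphere
  exactly; in particular its moments up to order 4 are those of the uniform distribution.\<close>

definition octahedron :: "(real^3) list" where
  "octahedron = [vector [1, 0, 0], vector [-1, 0, 0], vector [0, 1, 0], vector [0, -1, 0],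
    vector [0, 0, 1], vector [0, 0, -1]]"

definition points_221 :: "(real^3) list" where
  "points_221 = concat [[vector [2*a/3, 2*b/3, c/3], vector [2*a/3, b/3, 2*c/3], vector [a/3, 2*b/3, 2*c/3]].
    a \<leftarrow> [1, -1], b \<leftarrow> [1, -1], c \<leftarrow> [1, -1]]"

definition sphere_design :: "(real^3) pmf" where
  "sphere_design =
    pmf_of_list (map (\<lambda>p. (p, 13/240 :: real)) octahedron @ map (\<lambda>p. (p, 9/320 :: real)) points_221)"

lemma pmf_of_list_wf_sphere_design:
  "pmf_of_list_wf (map (\<lambda>p. (p, 13/240 :: real)) octahedron @ map (\<lambda>p. (p, 9/320 :: real)) points_221)"
  by (simp add: pmf_of_list_wf_def octahedron_def points_221_def)

lemma integral_sphere_design: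
  "(\<integral>m. f m \<partial>sphere_design) =
    (13/240 :: real) * (\<Sum>p\<leftarrow>octahedron. f p) + 9/320 * (\<Sum>p\<leftarrow>points_221. f p)"
  unfolding sphere_design_def integral_pmf_of_list[OF pmf_of_list_wf_sphere_design]
  by (simp only: map_append sum_list_append map_map comp_def prod.case sum_list_const_mult)

lemma norm_sphere_design:
  assumes "m \<in> set_pmf sphere_design"
  shows "norm m = 1"
proof -
  have "m \<in> set octahedron \<union> set points_221"
    using set_pmf_of_list[OF pmf_of_list_wf_sphere_design] assms by (auto simp: sphere_design_def)
  then show ?thesis
    by (auto simp: octahedron_def points_221_def norm_vector_3 power2_eq_square)
qed

lemma integrable_sphere_design [simp]: "integrable sphere_design (f :: real^3 \<Rightarrow> real)"
  by (rule integrable_measure_pmf_finite)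
    (simp add: sphere_design_def finite_set_pmf_of_list[OF pmf_of_list_wf_sphere_design])

lemma sphere_design_moments:
  "(\<integral>m. inner a m \<partial>sphere_design) = 0"
  "(\<integral>m. inner a m * inner b m \<partial>sphere_design) = inner a b / 3"
  "(\<integral>m. inner a m * (inner b m)^2 \<partial>sphere_design) = 0"
  "(\<integral>m. inner a m * (inner b m)^3 \<partial>sphere_design) = inner b b * inner a b / 5"
  by (simp_all add: integral_sphere_design octahedron_def points_221_def inner_vector_3
      inner_vec_def sum_3 algebra_simps power2_eq_square power3_eq_cube; simp add: field_simps)+

lemma integral_sphere_design_affine_cubic:
  "(\<integral>m. (c + inner a m) * (p0 + p1 * inner b m + p2 * (inner b m)^2 + p3 * (inner b m)^3) \<partial>sphere_design)
    = c * (p0 + p2 * inner b b / 3) + (p1 / 3 + p3 * inner b b / 5) * inner a b"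
proof -
  have expand: "(c + inner a m) * (p0 + p1 * inner b m + p2 * (inner b m)^2 + p3 * (inner b m)^3) =
      c * p0 + c * p1 * inner b m + c * p2 * (inner b m * inner b m)
      + c * p3 * (inner b m * (inner b m)^2) + p0 * inner a m + p1 * (inner a m * inner b m)
      + p2 * (inner a m * (inner b m)^2) + p3 * (inner a m * (inner b m)^3)" for m
    by (simp add: algebra_simps power2_eq_square power3_eq_cube)
  show ?thesis
    unfolding expand
    by (simp only: Bochner_Integration.integral_add integrable_sphere_design integral_mult_right_zero
        sphere_design_moments)
      (simp add: algebra_simps)
qed

section \<open>Response functions\<close>

definition alice_response :: "complex^2^2 \<Rightarrow> real^3 \<Rightarrow> real" where
  "alice_response M m = bloch_scalar M + inner (bloch_vector M) m"

lemma alice_response_nonneg: "psd M \<Longrightarrow> norm m = 1 \<Longrightarrow> 0 \<le> alice_response M m"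
  unfolding alice_response_def by (rule psd_imp_bloch_affine_nonneg)

lemma povm_sum_alice_response: "povm A \<Longrightarrow> (\<Sum>i<length A. alice_response (A ! i) m) = 1"
  by (simp add: alice_response_def sum.distrib povm_sum_bloch_scalar
      flip: inner_sum_left add: povm_sum_bloch_vector)

text \<open>\<open>bob_cubic r y = (r + y)\<^sup>2 (3 r - y) / (4 r\<^sup>2)\<close> lies between 0 and \<open>r + y\<close> for
  \<open>\<bar>y\<bar> \<le> r\<close>; against the uniform distribution on the sphere it has mean \<open>5 r / 6\<close>
  and correlation coefficient \<open>5/12 - 1/20 = 11/30\<close> with linear functions.\<close>

definition bob_cubic :: "real \<Rightarrow> real \<Rightarrow> real" where
  "bob_cubic r y = (3 * r + 5 * y + y^2 / r - y^3 / r^2) / 4"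

lemma bob_cubic_bounds:
  assumes "\<bar>y\<bar> \<le> r"
  shows "0 \<le> bob_cubic r y" and "bob_cubic r y \<le> r + y"
proof -
  have "0 \<le> bob_cubic r y \<and> bob_cubic r y \<le> r + y"
  proof (cases "r = 0")
    case True
    with assms show ?thesis by (simp add: bob_cubic_def)
  next
    case False
    with assms have "0 < r" by linarith
    have "bob_cubic r y = (r + y)^2 * (3 * r - y) / (4 * r^2)"
      and "r + y - bob_cubic r y = (r + y) * (r - y)^2 / (4 * r^2)"
      using \<open>0 < r\<close> by (simp_all add: bob_cubic_def field_simps power2_eq_square power3_eq_cube)
    moreover have "0 \<le> (r + y)^2 * (3 * r - y) / (4 * r^2)" "0 \<le> (r + y) * (r - y)^2 / (4 * r^2)"
      using assms by (intro divide_nonneg_nonneg mult_nonneg_nonneg; simp)+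
    ultimately show ?thesis
      by linarith
  qed
  then show "0 \<le> bob_cubic r y" "bob_cubic r y \<le> r + y" by auto
qed

definition bob_weight :: "complex^2^2 \<Rightarrow> real^3 \<Rightarrow> real" where
  "bob_weight M m = bob_cubic (norm (bloch_vector M)) (inner (bloch_vector M) m)
    + 5/6 * (bloch_scalar M - norm (bloch_vector M))"

lemma bob_weight_bounds:
  assumes "psd M" and "norm m = 1"
  shows "0 \<le> bob_weight M m" and "bob_weight M m \<le> alice_response M m"
proof -
  have "\<bar>inner (bloch_vector M) m\<bar> \<le> norm (bloch_vector M)"
    using Cauchy_Schwarz_ineq2[of "bloch_vector M" m] assms(2) by simp
  note cubic = bob_cubic_bounds[OF this]
  have norm_le: "norm (bloch_vector M) \<le> bloch_scalar M"
    by (rule psd_imp_norm_bloch_vector_le[OF assms(1)])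
  show "0 \<le> bob_weight M m"
    using cubic(1) norm_le unfolding bob_weight_def right_diff_distrib by linarith
  show "bob_weight M m \<le> alice_response M m"
    using cubic(2) norm_le unfolding bob_weight_def alice_response_def right_diff_distrib by linarith
qed

lemma integral_affine_times_bob_weight:
  "(\<integral>m. (c + inner a m) * bob_weight M m \<partial>sphere_design)
    = 5/6 * c * bloch_scalar M + 11/30 * inner a (bloch_vector M)"
proof -
  define b r where "b = bloch_vector M" and "r = norm (bloch_vector M)"
  have expand: "bob_weight M m = (3/4 * r + 5/6 * (bloch_scalar M - r)) + 5/4 * inner b m
      + 1 / (4 * r) * (inner b m)^2 + (- 1 / (4 * r^2)) * (inner b m)^3" for m
    by (simp add: bob_weight_def bob_cubic_def b_def r_def field_simps)
  have "(\<integral>m. (c + inner a m) * bob_weight M m \<partial>sphere_design)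
    = c * (3/4 * r + 5/6 * (bloch_scalar M - r) + 1 / (4 * r) * inner b b / 3)
      + (5/4 / 3 + (- 1 / (4 * r^2)) * inner b b / 5) * inner a b"
    unfolding expand by (rule integral_sphere_design_affine_cubic)
  also have "\<dots> = 5/6 * c * bloch_scalar M + 11/30 * inner a b"
  proof (cases "r = 0")
    case True
    then have "b = 0" by (simp add: r_def b_def)
    with True show ?thesis by simp
  next
    case False
    moreover have "inner b b = r^2" by (simp add: power2_norm_eq_inner b_def r_def)
    ultimately show ?thesis by (simp add: field_simps power2_eq_square)
  qed
  finally show ?thesis by (simp add: b_def)
qed

text \<open>The deficit \<open>1 - (\<Sum>k. bob_weight (B ! k) m)\<close> is nonnegative, has mean 1/6 and
  is uncorrelated with \<open>inner a m\<close>, because the Bloch vectors of a POVM sum to zero.\<close>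

definition bob_response :: "(complex^2^2) list \<Rightarrow> nat \<Rightarrow> real^3 \<Rightarrow> real" where
  "bob_response B j m =
    bob_weight (B ! j) m + bloch_scalar (B ! j) * (1 - (\<Sum>k<length B. bob_weight (B ! k) m))"

lemma bob_response_nonneg:
  assumes "povm B" and "j < length B" and "norm m = 1"
  shows "0 \<le> bob_response B j m"
proof -
  have "(\<Sum>k<length B. bob_weight (B ! k) m) \<le> (\<Sum>k<length B. alice_response (B ! k) m)"
    by (intro sum_mono bob_weight_bounds(2) povm_nth_psd[OF assms(1)] assms(3)) simp
  also have "\<dots> = 1"
    by (rule povm_sum_alice_response[OF assms(1)])
  finally show ?thesis
    unfolding bob_response_def
    by (intro add_nonneg_nonneg mult_nonneg_nonneg bob_weight_bounds(1) povm_nth_psd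
        psd_imp_bloch_scalar_nonneg assms) simp
qed

lemma povm_sum_bob_response:
  assumes "povm B"
  shows "(\<Sum>j<length B. bob_response B j m) = 1"
  by (simp add: bob_response_def sum.distrib povm_sum_bloch_scalar[OF assms]
      flip: sum_distrib_right)

lemma integral_alice_bob_response:
  assumes "povm B" and "j < length B"
  shows "(\<integral>m. alice_response M m * bob_response B j m \<partial>sphere_design)
    = bloch_scalar M * bloch_scalar (B ! j) + 11/30 * inner (bloch_vector M) (bloch_vector (B ! j))"
proof -
  define c a where "c = bloch_scalar M" and "a = bloch_vector M"
  have alice: "alice_response M m = c + inner a m" for m
    by (simp add: alice_response_def c_def a_def)
  have "(\<integral>m. alice_response M m * bob_response B j m \<partial>sphere_design)
    = (\<integral>m. (c + inner a m) * bob_weight (B ! j) m + bloch_scalar (B ! j) * (c + inner a m)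
        - bloch_scalar (B ! j) * (\<Sum>k<length B. (c + inner a m) * bob_weight (B ! k) m) \<partial>sphere_design)"
    by (simp add: alice bob_response_def algebra_simps sum_distrib_left)
  also have "\<dots> = (5/6 * c * bloch_scalar (B ! j) + 11/30 * inner a (bloch_vector (B ! j)))
      + bloch_scalar (B ! j) * c
      - bloch_scalar (B ! j) * (\<Sum>k<length B. 5/6 * c * bloch_scalar (B ! k) + 11/30 * inner a (bloch_vector (B ! k)))"
    by (simp add: Bochner_Integration.integral_add Bochner_Integration.integral_diff
        Bochner_Integration.integral_sum integral_affine_times_bob_weight sphere_design_moments)
  also have "(\<Sum>k<length B. 5/6 * c * bloch_scalar (B ! k) + 11/30 * inner a (bloch_vector (B ! k)))
      = 5/6 * c * (\<Sum>k<length B. bloch_scalar (B ! k))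
        + 11/30 * inner a (\<Sum>k<length B. bloch_vector (B ! k))"
    by (simp only: sum.distrib sum_distrib_left inner_sum_right)
  also have "\<dots> = 5/6 * c"
    by (simp add: povm_sum_bloch_scalar[OF assms(1)] povm_sum_bloch_vector[OF assms(1)])
  also have "5/6 * c * bloch_scalar (B ! j) + 11/30 * inner a (bloch_vector (B ! j))
      + bloch_scalar (B ! j) * c - bloch_scalar (B ! j) * (5/6 * c)
      = c * bloch_scalar (B ! j) + 11/30 * inner a (bloch_vector (B ! j))"
    by (simp add: algebra_simps)
  finally show ?thesis
    by (simp add: c_def a_def)
qed

section \<open>The hidden-variable space\<close>

definition embed_point :: "real^3 \<Rightarrow> hidden" where
  "embed_point m = (\<lambda>(_, _, n). if n = 0 then m $ 1 else if n = 1 then m $ 2 else m $ 3)"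

text \<open>The fallback \<open>axis 1 1\<close> only matters off the image of the unit sphere; it keeps every
  response function within its bounds on all of \<open>hidden\<close>.\<close>

definition hidden_point :: "hidden \<Rightarrow> real^3" where
  "hidden_point l =
    (let v = vector [l (False, [], 0), l (False, [], 1), l (False, [], 2)]
     in if norm v = 1 then v else axis 1 1)"

lemma norm_hidden_point: "norm (hidden_point l) = 1"
  by (simp add: hidden_point_def Let_def)

lemma hidden_point_embed_point:
  assumes "norm m = 1"
  shows "hidden_point (embed_point m) = m"
proof -
  have "vector [m $ 1, m $ 2, m $ 3] = m"
    by (simp add: vec_eq_iff forall_3 vector_3)
  with assms show ?thesis
    by (simp add: hidden_point_def embed_point_def)
qed

definition hidden_measure :: "hidden measure" where
  "hidden_measure = measure_pmf (map_pmf embed_point sphere_design)"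

lemma integral_hidden_measure:
  fixes f :: "real^3 \<Rightarrow> real"
  shows "(\<integral>l. f (hidden_point l) \<partial>hidden_measure) = (\<integral>m. f m \<partial>sphere_design)"
proof -
  have "(\<integral>l. f (hidden_point l) \<partial>hidden_measure)
      = (\<integral>m. f (hidden_point (embed_point m)) \<partial>sphere_design)"
    by (simp add: hidden_measure_def)
  also have "\<dots> = (\<integral>m. f m \<partial>sphere_design)"
    by (intro integral_cong_AE AE_pmfI) (simp_all add: hidden_point_embed_point norm_sphere_design)
  finally show ?thesis .
qed

lemma hidden_response_conditions:
  fixes R :: "nat \<Rightarrow> real^3 \<Rightarrow> real"
  assumes nonneg: "\<And>i m. i < n \<Longrightarrow> norm m = 1 \<Longrightarrow> 0 \<le> R i m"
    and sum_one: "\<And>m. norm m = 1 \<Longrightarrow> (\<Sum>i<n. R i m) = 1"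
  shows "(\<forall>i<n. (\<lambda>l. R i (hidden_point l)) \<in> borel_measurable hidden_measure \<and>
      (\<forall>l\<in>space hidden_measure. 0 \<le> R i (hidden_point l) \<and> R i (hidden_point l) \<le> 1)) \<and>
    (\<forall>l\<in>space hidden_measure. (\<Sum>i<n. R i (hidden_point l)) = 1)"
proof (intro conjI allI impI ballI)
  fix i l assume "i < n"
  show "(\<lambda>l. R i (hidden_point l)) \<in> borel_measurable hidden_measure"
    by (simp add: hidden_measure_def)
  show "0 \<le> R i (hidden_point l)"
    by (rule nonneg[OF \<open>i < n\<close> norm_hidden_point])
  show "R i (hidden_point l) \<le> 1"
    using member_le_sum[of i "{..<n}" "\<lambda>i. R i (hidden_point l)"] \<open>i < n\<close>
      nonneg[OF _ norm_hidden_point] sum_one[OF norm_hidden_point] by simp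
next
  fix l show "(\<Sum>i<n. R i (hidden_point l)) = 1"
    by (rule sum_one[OF norm_hidden_point])
qed

theorem proposition1:
  shows "\<exists>W :: complex^(2 \<times> 2)^(2 \<times> 2). beyond_quantum W \<and>
    (\<exists>(\<omega> :: hidden measure) (PA :: (complex^2^2) list \<Rightarrow> nat \<Rightarrow> hidden \<Rightarrow> real)
        (PB :: (complex^2^2) list \<Rightarrow> nat \<Rightarrow> hidden \<Rightarrow> real).
       prob_space \<omega> \<and>
       (\<forall>A. povm A \<longrightarrow>
          (\<forall>i < length A. PA A i \<in> borel_measurable \<omega> \<and>
             (\<forall>l\<in>space \<omega>. 0 \<le> PA A i l \<and> PA A i l \<le> 1)) \<and>
          (\<forall>l\<in>space \<omega>. (\<Sum>i<length A. PA A i l) = 1)) \<and>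
       (\<forall>B. povm B \<longrightarrow>
          (\<forall>j < length B. PB B j \<in> borel_measurable \<omega> \<and>
             (\<forall>l\<in>space \<omega>. 0 \<le> PB B j l \<and> PB B j l \<le> 1)) \<and>
          (\<forall>l\<in>space \<omega>. (\<Sum>j<length B. PB B j l) = 1)) \<and>
       (\<forall>A B. povm A \<longrightarrow> povm B \<longrightarrow>
          (\<forall>i < length A. \<forall>j < length B.
             trace (W ** tensor (A ! i) (B ! j)) =
             complex_of_real (\<integral>l. PA A i l * PB B j l \<partial>\<omega>))))"
proof -
  define PA where "PA A i l = alice_response (A ! i) (hidden_point l)" for A i l
  define PB where "PB B j l = bob_response B j (hidden_point l)" for B j l
  have beyond: "beyond_quantum (werner (11/30))"
    by (simp add: beyond_quantum_def density_def popt_werner not_psd_werner)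
  have prob: "prob_space hidden_measure"
    by (simp add: hidden_measure_def prob_space_measure_pmf)
  have alice: "(\<forall>i < length A. PA A i \<in> borel_measurable hidden_measure \<and>
      (\<forall>l\<in>space hidden_measure. 0 \<le> PA A i l \<and> PA A i l \<le> 1)) \<and>
    (\<forall>l\<in>space hidden_measure. (\<Sum>i<length A. PA A i l) = 1)" if "povm A" for A
    unfolding PA_def
    by (rule hidden_response_conditions[of "length A" "\<lambda>i. alice_response (A ! i)"])
      (simp_all add: alice_response_nonneg povm_nth_psd povm_sum_alice_response that)
  have bob: "(\<forall>j < length B. PB B j \<in> borel_measurable hidden_measure \<and>
      (\<forall>l\<in>space hidden_measure. 0 \<le> PB B j l \<and> PB B j l \<le> 1)) \<and>
    (\<forall>l\<in>space hidden_measure. (\<Sum>j<length B. PB B j l) = 1)" if "povm B" for B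
    unfolding PB_def
    by (rule hidden_response_conditions[of "length B" "bob_response B"])
      (simp_all add: bob_response_nonneg povm_sum_bob_response that)
  have correlation: "trace (werner (11/30) ** tensor (A ! i) (B ! j)) =
      complex_of_real (\<integral>l. PA A i l * PB B j l \<partial>hidden_measure)"
    if "povm A" "povm B" "i < length A" "j < length B" for A B i j
    using that
    by (simp add: PA_def PB_def
        integral_hidden_measure[where f = "\<lambda>m. alice_response (A ! i) m * bob_response B j m"]
        integral_alice_bob_response trace_werner_tensor psd2_imp_hermitian povm_nth_psd)
  show ?thesis
    by (rule exI[of _ "werner (11/30)"], rule conjI[OF beyond],
        rule exI[of _ hidden_measure], rule exI[of _ PA], rule exI[of _ PB])
      (use prob alice bob correlation in blast)
qed

end
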